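(* Let $d\ge 2$ and let $\{|\phi^a_x\rangle\}_{a=0}^{d-1}$, $x=0,\dots,d$, be a complete set of $d+1$ mutually unbiased bases of $\mathbb{C}^d$. Then for every function $\lambda:\{0,\dots,d\}\to\{0,\dots,d-1\}$, $$\Big\|\sum_{x=0}^{d}|\phi^{\lambda(x)}_x\rangle\langle\phi^{\lambda(x)}_x|\Big\|_\infty\le 1+\sqrt d .$$ Equivalently, the operators $F_{a|x}=\frac{1}{1+\sqrt d}|\phi^a_x\rangle\langle\phi^a_x|$ satisfy $F_{a|x}\ge 0$ and $\sum_{a,x}\delta_{a,\lambda(x)}F_{a|x}\le\mathbb{I}$ for every such $\lambda$. *)

theory Defs
  imports "HOL-Analysis.Analysis"
begin

definition cinner :: "complex ^ 'n \<Rightarrow> complex ^ 'n \<Rightarrow> complex" where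
  "cinner u v = (\<Sum>i\<in>UNIV. cnj (u $ i) * v $ i)"

definition outer :: "complex ^ 'n \<Rightarrow> complex ^ 'n ^ 'n" where
  "outer u = (\<chi> i j. u $ i * cnj (u $ j))"

definition opnorm :: "complex ^ 'n ^ 'n \<Rightarrow> real" where
  "opnorm A = onorm (\<lambda>v. A *v v)"

definition complete_MUBs :: "(nat \<Rightarrow> nat \<Rightarrow> complex ^ 'n) \<Rightarrow> bool" where
  "complete_MUBs phi \<longleftrightarrow>
     (\<forall>x\<le>CARD('n). \<forall>a<CARD('n). \<forall>b<CARD('n).
         cinner (phi x a) (phi x b) = (if a = b then 1 else 0)) \<and>
     (\<forall>x\<le>CARD('n). \<forall>y\<le>CARD('n). \<forall>a<CARD('n). \<forall>b<CARD('n).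
         x \<noteq> y \<longrightarrow> (cmod (cinner (phi x a) (phi y b)))\<^sup>2 = 1 / real CARD('n))"

end

theory Submission
  imports Defs
begin

text \<open>For unit vectors \<open>u\<^sub>x\<close> (\<open>x \<in> X\<close>) with pairwise overlaps \<open>|\<langle>u\<^sub>x, u\<^sub>y\<rangle>| \<le> r\<close>, put
  \<open>A = \<Sum>\<^sub>x |u\<^sub>x\<rangle>\<langle>u\<^sub>x|\<close> and \<open>c\<^sub>x = \<langle>u\<^sub>x, v\<rangle>\<close>. Then
  \<open>\<parallel>Av\<parallel>\<^sup>2 = \<Sum>\<^sub>x\<^sub>y c\<^sub>x\<^sup>* c\<^sub>y \<langle>u\<^sub>x, u\<^sub>y\<rangle>\<close>, and the Schur test for the Gram matrix, whose absolute row
  sums are at most \<open>1 + (|X| - 1) r\<close>, bounds this by \<open>(1 + (|X| - 1) r) \<Sum>\<^sub>x |c\<^sub>x|\<^sup>2\<close>.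
  Since \<open>\<Sum>\<^sub>x |c\<^sub>x|\<^sup>2 = \<langle>v, Av\<rangle> \<le> \<parallel>v\<parallel> \<parallel>Av\<parallel>\<close>, we get \<open>\<parallel>A\<parallel> \<le> 1 + (|X| - 1) r\<close>.
  One vector from each of \<open>d + 1\<close> mutually unbiased bases gives \<open>|X| = d + 1\<close> and
  \<open>r = 1/\<surd>d\<close>.\<close>

lemma Re_cnj_mult_self: "Re (cnj z * z) = (cmod z)\<^sup>2"
  by (metis Re_complex_of_real complex_norm_square mult.commute)

lemma cinner_commute: "cinner v u = cnj (cinner u v)"
  by (simp add: cinner_def mult.commute)

lemma norm_cinner_commute: "cmod (cinner v u) = cmod (cinner u v)"
  by (subst cinner_commute) simp

lemma power2_norm_eq_Re_cinner: "(norm w)\<^sup>2 = Re (cinner w w)"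
proof -
  have "(norm w)\<^sup>2 = (\<Sum>i\<in>UNIV. (cmod (w $ i))\<^sup>2)"
    by (simp add: norm_vec_def L2_set_def sum_nonneg)
  also have "\<dots> = Re (cinner w w)"
    unfolding cinner_def Re_sum Re_cnj_mult_self ..
  finally show ?thesis .
qed

lemma Re_cinner_le_norm_mult: "Re (cinner v w) \<le> norm v * norm w"
proof -
  have "Re (cinner v w) = inner v w"
    by (simp add: cinner_def inner_vec_def inner_complex_def Re_sum)
  then show ?thesis
    using norm_cauchy_schwarz by simp
qed

lemma outer_sum_mult_vec_nth:
  assumes "finite X"
  shows "((\<Sum>x\<in>X. outer (u x)) *v v) $ i = (\<Sum>x\<in>X. u x $ i * cinner (u x) v)"
proof -
  have "((\<Sum>x\<in>X. outer (u x)) *v v) $ i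
      = (\<Sum>j\<in>UNIV. (\<Sum>x\<in>X. u x $ i * cnj (u x $ j)) * v $ j)"
    by (simp add: matrix_vector_mult_def outer_def sum_component)
  also have "\<dots> = (\<Sum>x\<in>X. \<Sum>j\<in>UNIV. u x $ i * (cnj (u x $ j) * v $ j))"
    by (subst sum.swap) (simp add: sum_distrib_right mult.assoc)
  finally show ?thesis
    by (simp add: cinner_def sum_distrib_left)
qed

lemma cinner_lincomb_self:
  assumes "\<And>i. w $ i = (\<Sum>x\<in>X. u x $ i * c x)"
  shows "cinner w w = (\<Sum>x\<in>X. \<Sum>y\<in>X. cnj (c x) * c y * cinner (u x) (u y))"
proof -
  have "cinner w w
      = (\<Sum>i\<in>UNIV. \<Sum>x\<in>X. \<Sum>y\<in>X. cnj (c x) * c y * (cnj (u x $ i) * u y $ i))"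
    by (simp add: cinner_def assms sum_distrib_left sum_distrib_right algebra_simps)
  also have "\<dots> = (\<Sum>x\<in>X. \<Sum>y\<in>X. \<Sum>i\<in>UNIV. cnj (c x) * c y * (cnj (u x $ i) * u y $ i))"
    by (subst sum.swap) (simp add: sum.swap[of _ UNIV])
  finally show ?thesis
    by (simp add: cinner_def sum_distrib_left)
qed

lemma Re_cinner_outer_sum_mult_vec:
  assumes "finite X"
  shows "Re (cinner v ((\<Sum>x\<in>X. outer (u x)) *v v)) = (\<Sum>x\<in>X. (cmod (cinner (u x) v))\<^sup>2)"
proof -
  have "cinner v ((\<Sum>x\<in>X. outer (u x)) *v v)
      = (\<Sum>i\<in>UNIV. \<Sum>x\<in>X. cnj (v $ i) * u x $ i * cinner (u x) v)"
    by (simp add: cinner_def[of v] outer_sum_mult_vec_nth[OF assms] sum_distrib_left mult.assoc)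
  also have "\<dots> = (\<Sum>x\<in>X. (\<Sum>i\<in>UNIV. cnj (v $ i) * u x $ i) * cinner (u x) v)"
    by (subst sum.swap) (simp add: sum_distrib_right)
  also have "\<dots> = (\<Sum>x\<in>X. cnj (cinner (u x) v) * cinner (u x) v)"
    by (simp add: cinner_def mult.commute)
  finally show ?thesis
    by (simp only: Re_sum Re_cnj_mult_self)
qed

lemma Re_cnj_mult_mult_le:
  fixes a b g :: complex
  shows "Re (cnj a * b * g) \<le> cmod g * ((cmod a)\<^sup>2 + (cmod b)\<^sup>2) / 2"
proof -
  have "Re (cnj a * b * g) \<le> cmod a * cmod b * cmod g"
    using complex_Re_le_cmod[of "cnj a * b * g"] by (simp add: norm_mult)
  also have "\<dots> \<le> ((cmod a)\<^sup>2 + (cmod b)\<^sup>2) / 2 * cmod g"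
    using sum_squares_bound[of "cmod a" "cmod b"] by (intro mult_right_mono) simp_all
  finally show ?thesis
    by (simp add: mult.commute)
qed

lemma Schur_test_quadratic_form:
  fixes G :: "'a \<Rightarrow> 'a \<Rightarrow> complex"
  assumes "finite X"
    and rows: "\<And>x. x \<in> X \<Longrightarrow> (\<Sum>y\<in>X. cmod (G x y)) \<le> R"
    and cols: "\<And>y. y \<in> X \<Longrightarrow> (\<Sum>x\<in>X. cmod (G x y)) \<le> R"
  shows "Re (\<Sum>x\<in>X. \<Sum>y\<in>X. cnj (c x) * c y * G x y) \<le> R * (\<Sum>x\<in>X. (cmod (c x))\<^sup>2)"
proof -
  define a where "a x = (cmod (c x))\<^sup>2" for x
  have "Re (\<Sum>x\<in>X. \<Sum>y\<in>X. cnj (c x) * c y * G x y)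
      \<le> (\<Sum>x\<in>X. \<Sum>y\<in>X. cmod (G x y) * (a x + a y) / 2)"
    unfolding Re_sum a_def by (intro sum_mono Re_cnj_mult_mult_le)
  also have "\<dots> = ((\<Sum>x\<in>X. \<Sum>y\<in>X. a x * cmod (G x y)) + (\<Sum>x\<in>X. \<Sum>y\<in>X. a y * cmod (G x y))) / 2"
    by (simp add: sum.distrib add_divide_distrib sum_divide_distrib[symmetric] algebra_simps)
  also have "\<dots> = ((\<Sum>x\<in>X. a x * (\<Sum>y\<in>X. cmod (G x y)))
                   + (\<Sum>y\<in>X. a y * (\<Sum>x\<in>X. cmod (G x y)))) / 2"
    using sum.swap[of "\<lambda>x y. a y * cmod (G x y)" X X] by (simp add: sum_distrib_left)
  also have "\<dots> \<le> ((\<Sum>x\<in>X. a x * R) + (\<Sum>y\<in>X. a y * R)) / 2"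
    using rows cols by (intro divide_right_mono add_mono sum_mono mult_left_mono) (simp_all add: a_def)
  also have "\<dots> = R * (\<Sum>x\<in>X. a x)"
    by (simp add: sum_distrib_left mult.commute)
  finally show ?thesis
    unfolding a_def .
qed

lemma norm_outer_sum_mult_vec_le:
  assumes "finite X" and "R \<ge> 0"
    and rows: "\<And>x. x \<in> X \<Longrightarrow> (\<Sum>y\<in>X. cmod (cinner (u x) (u y))) \<le> R"
  shows "norm ((\<Sum>x\<in>X. outer (u x)) *v v) \<le> R * norm v"
proof -
  define w where "w = (\<Sum>x\<in>X. outer (u x)) *v v"
  have cols: "(\<Sum>x\<in>X. cmod (cinner (u x) (u y))) \<le> R" if "y \<in> X" for y
    using rows[OF that] by (simp add: norm_cinner_commute)
  have "(norm w)\<^sup>2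
      = Re (\<Sum>x\<in>X. \<Sum>y\<in>X. cnj (cinner (u x) v) * cinner (u y) v * cinner (u x) (u y))"
    unfolding power2_norm_eq_Re_cinner w_def
    by (rule arg_cong[where f = Re], rule cinner_lincomb_self, rule outer_sum_mult_vec_nth[OF assms(1)])
  also have "\<dots> \<le> R * (\<Sum>x\<in>X. (cmod (cinner (u x) v))\<^sup>2)"
    by (rule Schur_test_quadratic_form[OF assms(1) rows cols])
  also have "\<dots> = R * Re (cinner v w)"
    unfolding w_def Re_cinner_outer_sum_mult_vec[OF assms(1)] ..
  also have "\<dots> \<le> R * (norm v * norm w)"
    using Re_cinner_le_norm_mult assms(2) by (rule mult_left_mono)
  finally have "norm w * norm w \<le> (R * norm v) * norm w"
    by (simp add: power2_eq_square mult.assoc)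
  then have "norm w \<le> R * norm v"
    using assms(2) by (cases "norm w = 0") simp_all
  then show ?thesis
    unfolding w_def .
qed

lemma opnorm_outer_sum_le:
  assumes "finite X" and "r \<ge> 0"
    and unit: "\<And>x. x \<in> X \<Longrightarrow> cinner (u x) (u x) = 1"
    and overlap: "\<And>x y. x \<in> X \<Longrightarrow> y \<in> X \<Longrightarrow> x \<noteq> y \<Longrightarrow> cmod (cinner (u x) (u y)) \<le> r"
  shows "opnorm (\<Sum>x\<in>X. outer (u x)) \<le> 1 + real (card X - 1) * r"
proof -
  have rows: "(\<Sum>y\<in>X. cmod (cinner (u x) (u y))) \<le> 1 + real (card X - 1) * r" if x: "x \<in> X" for x
  proof -
    have "(\<Sum>y\<in>X. cmod (cinner (u x) (u y))) = 1 + (\<Sum>y\<in>X - {x}. cmod (cinner (u x) (u y)))"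
      using assms(1) x unit by (simp add: sum.remove)
    also have "(\<Sum>y\<in>X - {x}. cmod (cinner (u x) (u y))) \<le> (\<Sum>y\<in>X - {x}. r)"
      using overlap x by (intro sum_mono) auto
    finally show ?thesis
      using assms(1) x by (simp add: card_Diff_singleton)
  qed
  show ?thesis
    unfolding opnorm_def
    by (rule onorm_le, rule norm_outer_sum_mult_vec_le[OF assms(1) _ rows])
      (use assms(2) in simp_all)
qed

lemma complete_MUBs_cinner_self:
  assumes "complete_MUBs phi" and "x \<le> CARD('n)" and "a < CARD('n)"
  shows "cinner (phi x a :: complex ^ 'n) (phi x a) = 1"
  using assms unfolding complete_MUBs_def by simp

lemma complete_MUBs_norm_cinner:
  assumes "complete_MUBs phi" and "x \<le> CARD('n)" and "y \<le> CARD('n)" and "x \<noteq> y"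
    and "a < CARD('n)" and "b < CARD('n)"
  shows "cmod (cinner (phi x a :: complex ^ 'n) (phi y b)) = 1 / sqrt CARD('n)"
proof -
  have "(cmod (cinner (phi x a) (phi y b)))\<^sup>2 = 1 / CARD('n)"
    using assms unfolding complete_MUBs_def by blast
  then have "cmod (cinner (phi x a) (phi y b)) = sqrt (1 / CARD('n))"
    by (metis norm_ge_zero real_sqrt_unique)
  then show ?thesis
    by (simp add: real_sqrt_divide)
qed

theorem mainTheorem2:
  fixes phi :: "nat \<Rightarrow> nat \<Rightarrow> complex ^ 'n" and lam :: "nat \<Rightarrow> nat"
  assumes "CARD('n) \<ge> 2"
    and "complete_MUBs phi"
    and "\<forall>x\<le>CARD('n). lam x < CARD('n)"
  shows "opnorm (\<Sum>x\<le>CARD('n). outer (phi x (lam x))) \<le> 1 + sqrt (real CARD('n))"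
proof -
  let ?d = "CARD('n)"
  have "opnorm (\<Sum>x\<le>?d. outer (phi x (lam x))) \<le> 1 + real (card {..?d} - 1) * (1 / sqrt ?d)"
    using assms(3)
    by (intro opnorm_outer_sum_le complete_MUBs_cinner_self[OF assms(2)]
        eq_refl[OF complete_MUBs_norm_cinner[OF assms(2)]]) simp_all
  also have "real (card {..?d} - 1) * (1 / sqrt ?d) = sqrt ?d"
    by (simp add: real_div_sqrt)
  finally show ?thesis .
qed

end
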